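(* Let $(M^{4n},g)$ be a quaternionic Kähler manifold and $r$ an integer with $n+2r\geq 0$. The Chern character of $\mathrm{Sym}^{n+2r}H$ is $$\mathrm{ch}\,\mathrm{Sym}^{n+2r}H\;=\;\sum_{l\geq 0}\frac{2^{2l+1}}{(2l+1)!}\,B_{2l+1}\!\left(r+\frac{n+2}{2}\right)u^l,$$ where $u:=p_1(H)$ and $B_{2l+1}(x)$ is the $(2l+1)$-th Bernoulli polynomial.
   Context: A quaternionic Kähler manifold is a Riemannian $4n$-manifold with holonomy in $\mathbf{Sp}(1)\cdot\mathbf{Sp}(n)$; $H$ is the (locally defined) rank-2 bundle associated to the standard representation of $\mathbf{Sp}(1)$. Characteristic classes are computed formally via the splitting principle: $H=\ell\oplus\ell^{-1}$ with $c_1(\ell)=\pm\sqrt{u}$, i.e. $u=p_1(H)=c_1(\ell)^2$; equivalently $4u=p_1(\mathrm{Sym}^2H)$, which is a globally defined class. Bernoulli polynomials are characterized by $B_{\mu+1}(w+1)-B_{\mu+1}(w)=(\mu+1)w^\mu$ together with the standard normalization $B_k(x)=x^k-\frac12\binom k1x^{k-1}+\frac16\binom k2x^{k-2}-\dots$. *)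

theory Defs
  imports Complex_Main "HOL-Computational_Algebra.Formal_Power_Series"
begin

text \<open>Bernoulli numbers with the standard normalisation B_1 = -1/2:
  B_0 = 1 and sum over k < n+1 of (n+1 choose k) B_k = 0 for n \<ge> 1.\<close>
function bernoulli :: "nat \<Rightarrow> real" where
  "bernoulli n = (if n = 0 then 1
     else - (\<Sum>k<n. real ((n + 1) choose k) * bernoulli k) / real (n + 1))"
  by auto
termination by (relation "measure id") auto

definition bernpoly :: "nat \<Rightarrow> real \<Rightarrow> real" where
  "bernpoly n x = (\<Sum>k\<le>n. real (n choose k) * bernoulli k * x ^ (n - k))"

text \<open>Splitting principle: H = L + L^(-1), x = c_1(L) (formal variable fps_X).
  Then Sym^k H = sum over j = 0..k of L^(k-2j), so its Chern character, as a
  formal power series in x, is the sum of exp((k-2j) x).\<close>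
definition ch_Sym_H :: "nat \<Rightarrow> real fps" where
  "ch_Sym_H k = (\<Sum>j\<le>k. fps_exp (real_of_int (int k - 2 * int j)))"

text \<open>u = p_1(H) = x^2.\<close>
definition u_class :: "real fps" where
  "u_class = fps_X ^ 2"

end

theory Submission
  imports Defs
begin

(* Under the splitting principle the coefficient of x^m in ch Sym^k H is
   \<Sum>j\<le>k. (k - 2j)^m / m! = (-2)^m \<Sum>j\<le>k. (j - k/2)^m / m!.
   The power sum telescopes by B_{m+1}(y + 1) - B_{m+1}(y) = (m + 1) y^m to
   B_{m+1}(z) - B_{m+1}(1 - z) with z = k/2 + 1, and the reflection
   B_{m+1}(1 - z) = (-1)^(m+1) B_{m+1}(z) makes it vanish for odd m and equal
   2 B_{m+1}(z) for even m. So only powers of u = x^2 survive, and k = n + 2r gives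
   z = r + (n + 2)/2. Both Bernoulli identities are read off from the generating
   function t e^(yt) / (e^t - 1) = \<Sum>n. B_n(y) t^n / n!. *)

unbundle fps_syntax
declare bernoulli.simps [simp del]

lemma bernoulli_0 [simp]: "bernoulli 0 = 1"
  by (simp add: bernoulli.simps)

lemma bernoulli_recurrence:
  assumes "m \<ge> 1"
  shows "(\<Sum>k\<le>m. real (Suc m choose k) * bernoulli k) = 0"
proof -
  have "real (Suc m) * bernoulli m = - (\<Sum>k<m. real (Suc m choose k) * bernoulli k)"
    using assms by (subst bernoulli.simps) simp
  then show ?thesis
    by (simp add: lessThan_Suc_atMost[symmetric])
qed

definition bernoulli_fps :: "real fps" where
  "bernoulli_fps = Abs_fps (\<lambda>k. bernoulli k / fact k)"

lemma bernoulli_fps_times_exp_minus_one: "bernoulli_fps * (fps_exp 1 - 1) = fps_X"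
proof (rule fps_ext)
  fix n
  show "(bernoulli_fps * (fps_exp 1 - 1)) $ n = fps_X $ n"
  proof (cases n)
    case (Suc m)
    have "(bernoulli_fps * (fps_exp 1 - 1)) $ n
        = (\<Sum>i\<le>m. bernoulli i / fact i * (1 / fact (Suc m - i)))"
      unfolding Suc fps_mult_nth atLeast0AtMost sum.atMost_Suc
      by (auto simp: bernoulli_fps_def intro!: sum.cong)
    also have "\<dots> = (\<Sum>i\<le>m. real (Suc m choose i) * bernoulli i) / fact (Suc m)"
      unfolding sum_divide_distrib
      by (intro sum.cong refl) (simp add: binomial_fact field_simps del: fact_Suc)
    also have "\<dots> = fps_X $ n"
      using bernoulli_recurrence[of m] by (cases m) (auto simp: Suc)
    finally show ?thesis .
  qed (simp add: bernoulli_fps_def)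
qed

lemma bernpoly_fps: "Abs_fps (\<lambda>n. bernpoly n x / fact n) = bernoulli_fps * fps_exp x"
proof (rule fps_ext)
  fix n
  have "(bernoulli_fps * fps_exp x) $ n = (\<Sum>i\<le>n. bernoulli i / fact i * (x ^ (n - i) / fact (n - i)))"
    by (simp add: fps_mult_nth atLeast0AtMost bernoulli_fps_def)
  also have "\<dots> = bernpoly n x / fact n"
    unfolding bernpoly_def sum_divide_distrib
    by (intro sum.cong refl) (simp add: binomial_fact field_simps)
  finally show "Abs_fps (\<lambda>n. bernpoly n x / fact n) $ n = (bernoulli_fps * fps_exp x) $ n"
    by simp
qed

lemma bernpoly_Suc_plus_one: "bernpoly (Suc m) (x + 1) - bernpoly (Suc m) x = real (Suc m) * x ^ m"
proof -
  have "Abs_fps (\<lambda>n. bernpoly n (x + 1) / fact n) - Abs_fps (\<lambda>n. bernpoly n x / fact n)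
        = bernoulli_fps * (fps_exp 1 - 1) * fps_exp x"
    unfolding bernpoly_fps by (simp add: fps_exp_add_mult algebra_simps)
  also have "\<dots> = fps_X * fps_exp x"
    by (simp add: bernoulli_fps_times_exp_minus_one)
  finally have "(bernpoly (Suc m) (x + 1) - bernpoly (Suc m) x) / fact (Suc m) = x ^ m / fact m"
    by (auto dest: arg_cong[where f = "\<lambda>f. f $ Suc m"] simp: diff_divide_distrib)
  then show ?thesis
    by (simp add: divide_simps del: of_nat_Suc)
qed

lemma bernoulli_fps_compose_uminus: "bernoulli_fps oo - fps_X = bernoulli_fps * fps_exp 1"
proof -
  let ?B = "bernoulli_fps oo - fps_X"
  have "?B * (fps_exp (- 1) - 1) = - fps_X"
    using arg_cong[OF bernoulli_fps_times_exp_minus_one, of "\<lambda>f. f oo - fps_X"]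
    by (simp add: fps_compose_mult_distrib fps_compose_sub_distrib)
  moreover have "?B * (fps_exp (- 1) - 1) * fps_exp 1 = - (?B * (fps_exp 1 - 1))"
    by (simp only: algebra_simps flip: fps_exp_add_mult) (simp flip: fps_exp_add_mult)
  ultimately have "?B * (fps_exp 1 - 1) = bernoulli_fps * (fps_exp 1 - 1) * fps_exp 1"
    by (simp add: bernoulli_fps_times_exp_minus_one)
  moreover have "fps_exp 1 - 1 \<noteq> (0 :: real fps)"
    by (auto dest: arg_cong[where f = "\<lambda>f. f $ 1"])
  ultimately show ?thesis
    by simp
qed

lemma bernpoly_one_minus: "bernpoly n (1 - x) = (-1) ^ n * bernpoly n x"
proof -
  have "Abs_fps (\<lambda>n. bernpoly n x / fact n) oo - fps_X = Abs_fps (\<lambda>n. bernpoly n (1 - x) / fact n)"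
    unfolding bernpoly_fps
    by (simp add: fps_compose_mult_distrib bernoulli_fps_compose_uminus mult.assoc
             flip: fps_exp_add_mult)
  then have "(-1) ^ n * (bernpoly n x / fact n) = bernpoly n (1 - x) / fact n"
    by (auto dest: arg_cong[where f = "\<lambda>f. f $ n"] simp: fps_compose_uminus')
  then show ?thesis
    by (simp add: field_simps)
qed

lemma sum_power_shift_bernpoly:
  "real (Suc m) * (\<Sum>j\<le>k. (y + real j) ^ m) = bernpoly (Suc m) (y + real k + 1) - bernpoly (Suc m) y"
proof (induction k)
  case 0
  then show ?case
    using bernpoly_Suc_plus_one[of m y] by simp
next
  case (Suc k)
  then show ?case
    using bernpoly_Suc_plus_one[of m "y + real (Suc k)"] by (simp add: algebra_simps)
qed

lemma sum_sym_weights_power: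
  "real (Suc m) * (\<Sum>j\<le>k. (real k - 2 * real j) ^ m)
     = (-2) ^ m * (1 + (-1) ^ m) * bernpoly (Suc m) ((real k + 2) / 2)"
proof -
  define z where "z = (real k + 2) / 2"
  have shift: "1 - z + real k + 1 = z"
    by (simp add: z_def field_simps)
  have power_term: "(real k - 2 * real j) ^ m = (-2) ^ m * (1 - z + real j) ^ m" for j
  proof -
    have "real k - 2 * real j = -2 * (1 - z + real j)"
      by (simp add: z_def field_simps)
    then show ?thesis
      by (simp only: power_mult_distrib)
  qed
  have "real (Suc m) * (\<Sum>j\<le>k. (real k - 2 * real j) ^ m)
      = (-2) ^ m * (real (Suc m) * (\<Sum>j\<le>k. (1 - z + real j) ^ m))"
    by (simp add: power_term sum_distrib_left mult.left_commute)
  also have "\<dots> = (-2) ^ m * (bernpoly (Suc m) z - bernpoly (Suc m) (1 - z))"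
    by (simp only: sum_power_shift_bernpoly shift)
  also have "\<dots> = (-2) ^ m * (1 + (-1) ^ m) * bernpoly (Suc m) z"
    by (simp add: bernpoly_one_minus algebra_simps)
  finally show ?thesis
    by (simp add: z_def)
qed

lemma ch_Sym_H_nth: "ch_Sym_H k $ m = (\<Sum>j\<le>k. (real k - 2 * real j) ^ m) / fact m"
  unfolding ch_Sym_H_def fps_sum_nth fps_exp_nth sum_divide_distrib
  by (intro sum.cong refl) simp

lemma fps_nth_compose_X_squared:
  "(a oo fps_X ^ 2) $ m = (if even m then a $ (m div 2) else 0)"
proof -
  have "(a oo fps_X ^ 2) $ m = (\<Sum>i=0..m. if even m \<and> i = m div 2 then a $ i else 0)"
    unfolding fps_compose_nth power_mult[symmetric] fps_X_power_nth
    by (intro sum.cong refl) auto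
  then show ?thesis
    by simp
qed

lemma ch_Sym_H_eq_bernpoly:
  "ch_Sym_H k = Abs_fps (\<lambda>l. 2 ^ (2 * l + 1) / fact (2 * l + 1) * bernpoly (2 * l + 1) ((real k + 2) / 2))
                  oo u_class"
proof (rule fps_ext)
  fix m
  have "ch_Sym_H k $ m = (-2) ^ m * (1 + (-1) ^ m) * bernpoly (Suc m) ((real k + 2) / 2) / fact (Suc m)"
    using sum_sym_weights_power[of m k]
    by (simp add: ch_Sym_H_nth field_simps del: of_nat_Suc)
  then show "ch_Sym_H k $ m = (Abs_fps (\<lambda>l. 2 ^ (2 * l + 1) / fact (2 * l + 1)
                 * bernpoly (2 * l + 1) ((real k + 2) / 2)) oo u_class) $ m"
    by (auto simp: u_class_def fps_nth_compose_X_squared elim!: evenE)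
qed

theorem lemma2p1:
  fixes n :: nat and r :: int
  assumes "int n + 2 * r \<ge> 0"
  shows "ch_Sym_H (nat (int n + 2 * r)) =
    fps_compose
      (Abs_fps (\<lambda>l. 2 ^ (2 * l + 1) / fact (2 * l + 1)
                     * bernpoly (2 * l + 1) (real_of_int r + (real n + 2) / 2)))
      u_class"
proof -
  have "(real (nat (int n + 2 * r)) + 2) / 2 = real_of_int r + (real n + 2) / 2"
    using assms by (simp add: field_simps)
  then show ?thesis
    by (simp only: ch_Sym_H_eq_bernpoly)
qed

end
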